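(* Let $R=k[x_1,\dots,x_n]$ be graded by a monoid $P$ as described in the context, let $G$ act on $R$ by permuting the variables, let $\preceq$ be a monomial order, and let $I\subset R$ be a $P$-homogeneous ideal such that $\mathrm{in}_{\preceq}(I)$ is generated in (standard) degrees $\le d$. If $G$ acts monomially on $I$ up to degree $d$ and the action is $P$-compatible, then the Hilbert series of $I$ is $G$-invariant: $g(HS(I,t))=HS(I,t)$ for all $g\in G$.
   Context: $R$ is graded by a monoid $P$ such that every monomial is $P$-homogeneous and the $P$-grading refines the standard grading (each $P$-graded piece is finite dimensional). $HS(I,t)=\sum_{D\in P}\dim_k(I_D)\,t^D$. The action of $G$ is $P$-compatible if for every $g\in G$ the map $\hat g:P\to P$, $\hat g(D)=\deg(g(m))$ for any monomial $m$ with $\deg(m)=D$, is a well-defined endomorphism of $P$; then $G$ acts on power series by $g(\sum_D a_Dt^D)=\sum_D a_Dt^{\hat g(D)}$. For $h\in R$, $\mathrm{mon}(h)$ is the set of monomials of $h$ with nonzero coefficient; $G$ acts monomially on $I$ up to degree $d$ if for every $h\in I$ of standard degree $\le d$ and every $g\in G$ there is $h'\in I$ with $\mathrm{mon}(h')=\mathrm{mon}(g(h))$. *)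

theory Defs
  imports "HOL-Library.Poly_Mapping" "HOL.Vector_Spaces"
begin

text \<open>Polynomial ring R = k[x_v : v in 'v] (finitely many variables, 'v finite):
  monomials are exponent vectors (finitely supported v -> nat), polynomials are finitely
  supported coefficient functions on monomials.\<close>

type_synonym 'v mon = "'v \<Rightarrow>\<^sub>0 nat"
type_synonym ('v, 'k) mpoly = "'v mon \<Rightarrow>\<^sub>0 'k"

definition kscale :: "'k::field \<Rightarrow> ('v, 'k) mpoly \<Rightarrow> ('v, 'k) mpoly" where
  "kscale c p = Poly_Mapping.map (\<lambda>x. c * x) p"

definition tdeg :: "'v mon \<Rightarrow> nat" where
  "tdeg m = (\<Sum>v\<in>Poly_Mapping.keys m. Poly_Mapping.lookup m v)"

definition std_deg :: "('v, 'k::zero) mpoly \<Rightarrow> nat" where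
  "std_deg h = Max (insert 0 (tdeg ` Poly_Mapping.keys h))"

text \<open>permutation g of the variables acting on monomials and polynomials: x_v \<mapsto> x_(g v)\<close>
definition act_mon :: "('v \<Rightarrow> 'v) \<Rightarrow> 'v mon \<Rightarrow> 'v mon" where
  "act_mon g m = Poly_Mapping.map_key (inv g) m"

definition act_poly :: "('v \<Rightarrow> 'v) \<Rightarrow> ('v, 'k::zero) mpoly \<Rightarrow> ('v, 'k) mpoly" where
  "act_poly g f = Poly_Mapping.map_key (act_mon (inv g)) f"

definition perm_group :: "('v \<Rightarrow> 'v) set \<Rightarrow> bool" where
  "perm_group G \<longleftrightarrow> (\<forall>g\<in>G. bij g) \<and> id \<in> G \<and> (\<forall>g\<in>G. \<forall>h\<in>G. g \<circ> h \<in> G)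
     \<and> (\<forall>g\<in>G. inv g \<in> G)"

definition monomial_order :: "('v mon \<Rightarrow> 'v mon \<Rightarrow> bool) \<Rightarrow> bool" where
  "monomial_order le \<longleftrightarrow>
     (\<forall>a. le a a) \<and> (\<forall>a b. le a b \<longrightarrow> le b a \<longrightarrow> a = b)
     \<and> (\<forall>a b c. le a b \<longrightarrow> le b c \<longrightarrow> le a c) \<and> (\<forall>a b. le a b \<or> le b a)
     \<and> (\<forall>a b c. le a b \<longrightarrow> le (a + c) (b + c))
     \<and> wf {(a, b). le a b \<and> a \<noteq> b}"

definition lead_mon :: "('v mon \<Rightarrow> 'v mon \<Rightarrow> bool) \<Rightarrow> ('v, 'k::zero) mpoly \<Rightarrow> 'v mon" where
  "lead_mon le f = (THE m. m \<in> Poly_Mapping.keys f \<and> (\<forall>m'\<in>Poly_Mapping.keys f. le m' m))"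

definition init_ideal :: "('v mon \<Rightarrow> 'v mon \<Rightarrow> bool) \<Rightarrow> ('v, 'k::field) mpoly set
    \<Rightarrow> ('v, 'k) mpoly set" where
  "init_ideal le I = module.span ((*) :: ('v, 'k) mpoly \<Rightarrow> _ \<Rightarrow> _)
     {Poly_Mapping.single (lead_mon le f) 1 | f. f \<in> I \<and> f \<noteq> 0}"

abbreviation is_ideal :: "('v, 'k::field) mpoly set \<Rightarrow> bool" where
  "is_ideal I \<equiv> module.subspace ((*) :: ('v, 'k) mpoly \<Rightarrow> _ \<Rightarrow> _) I"

abbreviation ideal_gen :: "('v, 'k::field) mpoly set \<Rightarrow> ('v, 'k) mpoly set" where
  "ideal_gen S \<equiv> module.span ((*) :: ('v, 'k) mpoly \<Rightarrow> _ \<Rightarrow> _) S"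

definition P_grading :: "('v mon \<Rightarrow> 'p::monoid_add) \<Rightarrow> bool" where
  "P_grading deg \<longleftrightarrow> deg 0 = 0 \<and> (\<forall>a b. deg (a + b) = deg a + deg b)"

definition P_homogeneous :: "('v mon \<Rightarrow> 'p) \<Rightarrow> ('v, 'k::zero) mpoly \<Rightarrow> bool" where
  "P_homogeneous deg f \<longleftrightarrow> (\<exists>D. \<forall>m\<in>Poly_Mapping.keys f. deg m = D)"

definition std_homogeneous_le :: "nat \<Rightarrow> ('v, 'k::zero) mpoly \<Rightarrow> bool" where
  "std_homogeneous_le d f \<longleftrightarrow> (\<exists>e\<le>d. \<forall>m\<in>Poly_Mapping.keys f. tdeg m = e)"

definition piece :: "('v mon \<Rightarrow> 'p) \<Rightarrow> ('v, 'k::zero) mpoly set \<Rightarrow> 'p \<Rightarrow> ('v, 'k) mpoly set" where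
  "piece deg I D = {f \<in> I. \<forall>m\<in>Poly_Mapping.keys f. deg m = D}"

text \<open>Hilbert series, as its coefficient function D \<mapsto> dim_k I_D\<close>
definition hilbert_series :: "('v mon \<Rightarrow> 'p) \<Rightarrow> ('v, 'k::field) mpoly set \<Rightarrow> 'p \<Rightarrow> nat" where
  "hilbert_series deg I D = vector_space.dim kscale (piece deg I D)"

definition monoid_endo :: "('p::monoid_add \<Rightarrow> 'p) \<Rightarrow> bool" where
  "monoid_endo \<phi> \<longleftrightarrow> \<phi> 0 = 0 \<and> (\<forall>a b. \<phi> (a + b) = \<phi> a + \<phi> b)"

definition induced_endo :: "('v mon \<Rightarrow> 'p::monoid_add) \<Rightarrow> ('v \<Rightarrow> 'v) \<Rightarrow> ('p \<Rightarrow> 'p) \<Rightarrow> bool" where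
  "induced_endo deg g \<phi> \<longleftrightarrow> monoid_endo \<phi> \<and> (\<forall>m. deg (act_mon g m) = \<phi> (deg m))"

definition P_compatible :: "('v mon \<Rightarrow> 'p::monoid_add) \<Rightarrow> ('v \<Rightarrow> 'v) set \<Rightarrow> bool" where
  "P_compatible deg G \<longleftrightarrow> (\<forall>g\<in>G. \<exists>\<phi>. induced_endo deg g \<phi>)"

text \<open>action on power series: g(\<Sum> a_D t^D) = \<Sum> a_D t^(\<phi> D); coefficient of t^E\<close>
definition ps_act :: "('p \<Rightarrow> 'p) \<Rightarrow> ('p \<Rightarrow> nat) \<Rightarrow> 'p \<Rightarrow> nat" where
  "ps_act \<phi> F E = (\<Sum>D\<in>{D. F D \<noteq> 0 \<and> \<phi> D = E}. F D)"

definition acts_monomially_upto :: "('v \<Rightarrow> 'v) set \<Rightarrow> ('v, 'k::zero) mpoly set \<Rightarrow> nat \<Rightarrow> bool" where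
  "acts_monomially_upto G I d \<longleftrightarrow>
     (\<forall>h\<in>I. std_deg h \<le> d \<longrightarrow> (\<forall>g\<in>G. \<exists>h'\<in>I. Poly_Mapping.keys h' = Poly_Mapping.keys (act_poly g h)))"

end

(*
  For every linear order on monomials, the dimension of a finite-dimensional space
  of polynomials equals the number of its leading monomials. Let m be a leading monomial of the
  graded piece I_D. As in(I) is generated in degrees <= d, m = c + m0 where m0 is the leading
  monomial of a P-homogeneous f0 in I of standard degree <= d. The action is monomial on f0, so
  some h in I has support g(supp f0), and x^(g c) h lies in I_(g-hat D) with leading monomial
  g(m) for the order transported along g. Hence g maps the leading monomials of I_D injectively
  into those of I_(g-hat D), so dim I_D <= dim I_(g-hat D). Applying this also to g^-1 gives
  equality, and g-hat permutes the degrees that occur, so g fixes HS(I,t).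
*)

theory Submission
  imports Defs
begin

lemma lookup_kscale [simp]:
  "Poly_Mapping.lookup (kscale c p) m = c * Poly_Mapping.lookup p m"
  by (simp add: kscale_def Poly_Mapping.map.rep_eq when_def)

lemma kscale_eq_single_mult: "kscale c p = Poly_Mapping.single 0 c * p"
  by (simp add: kscale_def mult_map_scale_conv_mult)

interpretation K: vector_space "kscale :: 'k::field \<Rightarrow> ('v, 'k) mpoly \<Rightarrow> _"
  by unfold_locales
    (simp_all add: kscale_eq_single_mult distrib_left distrib_right single_add mult_single
      flip: mult.assoc)

interpretation R: module "(*) :: ('v, 'k::field) mpoly \<Rightarrow> _"
  by unfold_locales (simp_all add: distrib_left distrib_right mult.assoc)

lemma ideal_kscale:
  fixes I :: "('v, 'k::field) mpoly set"
  shows "is_ideal I \<Longrightarrow> f \<in> I \<Longrightarrow> kscale c f \<in> I"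
  by (simp add: kscale_eq_single_mult R.subspace_scale)

lemma subspace_piece:
  fixes I :: "('v, 'k::field) mpoly set"
  assumes "is_ideal I"
  shows "K.subspace (piece deg I D)"
proof -
  have "Poly_Mapping.keys (f + h) \<subseteq> Poly_Mapping.keys f \<union> Poly_Mapping.keys h" for f h :: "('v, 'k) mpoly"
    by (rule keys_add)
  moreover have "Poly_Mapping.keys (kscale c f) \<subseteq> Poly_Mapping.keys f" for c and f :: "('v, 'k) mpoly"
    by (auto simp: in_keys_iff)
  ultimately show ?thesis
    using assms unfolding K.subspace_def piece_def
    by (fastforce intro: R.subspace_0 R.subspace_add ideal_kscale)
qed

lemma lookup_single_mult_add:
  fixes p :: "('a::cancel_comm_monoid_add \<Rightarrow>\<^sub>0 'b::semiring_0)"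
  shows "Poly_Mapping.lookup (Poly_Mapping.single a x * p) (a + k) = x * Poly_Mapping.lookup p k"
  by (simp add: lookup_mult lookup_single when_mult mult_when Sum_any_right_distrib)

lemma keys_single_mult:
  fixes p :: "('a::cancel_comm_monoid_add \<Rightarrow>\<^sub>0 'b::{semiring_0, semiring_no_zero_divisors})"
  assumes "x \<noteq> 0"
  shows "Poly_Mapping.keys (Poly_Mapping.single a x * p) = (+) a ` Poly_Mapping.keys p"
proof
  show "Poly_Mapping.keys (Poly_Mapping.single a x * p) \<subseteq> (+) a ` Poly_Mapping.keys p"
    using keys_mult[of "Poly_Mapping.single a x" p] by (auto split: if_splits)
  show "(+) a ` Poly_Mapping.keys p \<subseteq> Poly_Mapping.keys (Poly_Mapping.single a x * p)"
    using assms by (auto simp: in_keys_iff lookup_single_mult_add)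
qed

lemma lookup_act_mon:
  assumes "bij g"
  shows "Poly_Mapping.lookup (act_mon g m) v = Poly_Mapping.lookup m (inv g v)"
  using assms unfolding act_mon_def by (simp add: map_key.rep_eq bij_is_inj bij_imp_bij_inv)

lemma act_mon_inv_act_mon:
  assumes "bij g"
  shows "act_mon (inv g) (act_mon g m) = m"
  by (rule poly_mapping_eqI)
    (simp add: assms lookup_act_mon bij_imp_bij_inv inv_inv_eq bij_is_inj)

lemma act_mon_act_mon_inv:
  assumes "bij g"
  shows "act_mon g (act_mon (inv g) m) = m"
  by (rule poly_mapping_eqI)
    (simp add: assms lookup_act_mon bij_imp_bij_inv inv_inv_eq bij_is_surj surj_f_inv_f)

lemma act_mon_add:
  assumes "bij g"
  shows "act_mon g (a + b) = act_mon g a + act_mon g b"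
  by (rule poly_mapping_eqI) (simp add: assms lookup_act_mon lookup_add)

lemma inj_act_mon: "bij g \<Longrightarrow> inj (act_mon g)"
  by (metis act_mon_inv_act_mon injI)

lemma keys_act_poly:
  assumes "bij g"
  shows "Poly_Mapping.keys (act_poly g f) = act_mon g ` Poly_Mapping.keys f"
proof -
  have "Poly_Mapping.keys (act_poly g f) = act_mon (inv g) -` Poly_Mapping.keys f"
    unfolding act_poly_def
    by (simp add: keys_map_key inj_act_mon assms bij_imp_bij_inv)
  also have "\<dots> = act_mon g ` Poly_Mapping.keys f"
    using act_mon_inv_act_mon[OF assms] act_mon_act_mon_inv[OF assms]
    by (auto intro!: image_eqI[where x = "act_mon (inv g) _"])
  finally show ?thesis .
qed

lemma tdeg_add: "tdeg ((a :: ('v::finite) mon) + b) = tdeg a + tdeg b"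
proof -
  have tdeg_UNIV: "tdeg m = (\<Sum>v\<in>UNIV. Poly_Mapping.lookup m v)" for m :: "'v mon"
    unfolding tdeg_def by (rule sum.mono_neutral_left) (auto simp: in_keys_iff)
  show ?thesis by (simp add: tdeg_UNIV lookup_add sum.distrib)
qed

section \<open>Leading monomials and dimension\<close>

lemma lead_mon_eqI:
  assumes "class.linorder le lt" "m \<in> Poly_Mapping.keys f" "\<forall>m'\<in>Poly_Mapping.keys f. le m' m"
  shows "lead_mon le f = m"
proof -
  interpret L: linorder le lt by fact
  show ?thesis
    unfolding lead_mon_def using assms(2,3) by (intro the_equality) (auto intro: L.order.antisym)
qed

lemma
  assumes lin: "class.linorder le lt" and "f \<noteq> 0"
  shows lead_mon_in_keys: "lead_mon le f \<in> Poly_Mapping.keys f"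
    and lead_mon_max: "m \<in> Poly_Mapping.keys f \<Longrightarrow> le m (lead_mon le f)"
proof -
  have "lead_mon le f = linorder.Max le (Poly_Mapping.keys f)"
    using assms by (intro lead_mon_eqI[OF lin]) (simp_all add: linorder.Max_in linorder.Max_ge)
  then show "lead_mon le f \<in> Poly_Mapping.keys f"
    and "m \<in> Poly_Mapping.keys f \<Longrightarrow> le m (lead_mon le f)"
    using assms by (simp_all add: linorder.Max_in linorder.Max_ge)
qed

lemma monomial_order_linorder:
  "monomial_order le \<Longrightarrow> class.linorder le (\<lambda>a b. le a b \<and> \<not> le b a)"
  unfolding monomial_order_def by unfold_locales blast+

lemma monomial_order_add_left: "monomial_order le \<Longrightarrow> le a b \<Longrightarrow> le (c + a) (c + b)"
  unfolding monomial_order_def by (metis add.commute)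

definition act_order :: "('v \<Rightarrow> 'v) \<Rightarrow> ('v mon \<Rightarrow> 'v mon \<Rightarrow> bool) \<Rightarrow> 'v mon \<Rightarrow> 'v mon \<Rightarrow> bool" where
  "act_order g le a b \<longleftrightarrow> le (act_mon (inv g) a) (act_mon (inv g) b)"

lemma linorder_act_order:
  assumes "class.linorder le lt" "bij g"
  shows "class.linorder (act_order g le) (act_order g lt)"
proof -
  interpret L: linorder le lt by fact
  have "inj (act_mon (inv g))" using assms(2) by (simp add: inj_act_mon bij_imp_bij_inv)
  then show ?thesis
    unfolding act_order_def
    by unfold_locales (auto simp: L.less_le_not_le intro: L.order_trans L.linear injD L.order.antisym)
qed

definition lead_mons :: "('v mon \<Rightarrow> 'v mon \<Rightarrow> bool) \<Rightarrow> ('v, 'k::zero) mpoly set \<Rightarrow> 'v mon set" where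
  "lead_mons le V = {lead_mon le f | f. f \<in> V \<and> f \<noteq> 0}"

lemma independent_distinct_lead_mons:
  fixes B :: "('v, 'k::field) mpoly set"
  assumes lin: "class.linorder le lt" and nz: "0 \<notin> B" and inj: "inj_on (lead_mon le) B"
  shows "K.independent B"
  unfolding K.independent_explicit_module
proof (intro allI impI, rule ccontr)
  interpret L: linorder le lt by fact
  fix t u v
  assume t: "finite t" "t \<subseteq> B" and sum_eq_0: "(\<Sum>w\<in>t. kscale (u w) w) = 0"
    and "v \<in> t" "u v \<noteq> 0"
  define T where "T = {w\<in>t. u w \<noteq> 0}"
  have T: "finite T" "T \<noteq> {}" "T \<subseteq> t"
    using t \<open>v \<in> t\<close> \<open>u v \<noteq> 0\<close> unfolding T_def by auto
  define m where "m = L.Max (lead_mon le ` T)"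
  have "m \<in> lead_mon le ` T" unfolding m_def using T by (intro L.Max_in) auto
  then obtain w0 where w0: "w0 \<in> T" "lead_mon le w0 = m" by blast
  have w0_nz: "w0 \<noteq> 0" using w0 T t nz by blast
  have "m \<notin> Poly_Mapping.keys w" if "w \<in> T" "w \<noteq> w0" for w
  proof
    assume m_key: "m \<in> Poly_Mapping.keys w"
    have "w \<noteq> 0" using that T t nz by blast
    then have "le m (lead_mon le w)" using m_key by (rule lead_mon_max[OF lin])
    moreover have "le (lead_mon le w) m" using T that unfolding m_def by simp
    ultimately have "lead_mon le w = lead_mon le w0" using w0 L.order.antisym by blast
    then show False using inj that w0 T t by (auto dest: inj_onD)
  qed
  then have "(\<Sum>w\<in>t - {w0}. u w * Poly_Mapping.lookup w m) = 0"
    by (intro sum.neutral) (auto simp: T_def in_keys_iff)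
  moreover have "w0 \<in> t" using w0 T by blast
  ultimately have "Poly_Mapping.lookup (\<Sum>w\<in>t. kscale (u w) w) m = u w0 * Poly_Mapping.lookup w0 m"
    by (simp add: lookup_sum lookup_add sum.remove[OF t(1), of w0])
  also have "\<dots> \<noteq> 0"
    using w0 lead_mon_in_keys[OF lin w0_nz] unfolding T_def by (simp add: in_keys_iff)
  finally show False using sum_eq_0 by simp
qed

lemma lead_mon_reduce_less:
  fixes f b :: "('v, 'k::field) mpoly"
  assumes lin: "class.linorder le lt" and nz: "f \<noteq> 0" "b \<noteq> 0"
    and lead: "lead_mon le b = lead_mon le f"
  defines "f' \<equiv> f - kscale (Poly_Mapping.lookup f (lead_mon le f)
      / Poly_Mapping.lookup b (lead_mon le f)) b"
  assumes f'_nz: "f' \<noteq> 0"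
  shows "lt (lead_mon le f') (lead_mon le f)"
proof -
  interpret L: linorder le lt by fact
  have "Poly_Mapping.lookup b (lead_mon le f) \<noteq> 0"
    using lead_mon_in_keys[OF lin nz(2)] lead by (simp add: in_keys_iff)
  then have "Poly_Mapping.lookup f' (lead_mon le f) = 0" unfolding f'_def by (simp add: lookup_minus)
  then have "lead_mon le f' \<noteq> lead_mon le f"
    using lead_mon_in_keys[OF lin f'_nz] by (auto simp: in_keys_iff)
  moreover have "lead_mon le f' \<in> Poly_Mapping.keys f \<union> Poly_Mapping.keys b"
    using lead_mon_in_keys[OF lin f'_nz] unfolding f'_def by (auto simp: in_keys_iff lookup_minus)
  then have "le (lead_mon le f') (lead_mon le f)"
    using lead_mon_max[OF lin nz(1)] lead_mon_max[OF lin nz(2)] lead by (metis Un_iff)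
  ultimately show ?thesis by (simp add: L.order.not_eq_order_implies_strict)
qed

lemma span_lead_mon_representatives:
  fixes V B :: "('v, 'k::field) mpoly set"
  assumes lin: "class.linorder le lt" and V: "K.subspace V"
    and fin: "finite (\<Union> (Poly_Mapping.keys ` V))"
    and rep: "\<And>f. f \<in> V \<Longrightarrow> f \<noteq> 0 \<Longrightarrow> \<exists>b\<in>B. b \<in> V \<and> b \<noteq> 0 \<and> lead_mon le b = lead_mon le f"
  shows "V \<subseteq> K.span B"
proof (rule ccontr)
  interpret L: linorder le lt by fact
  define C where "C = {f \<in> V. f \<notin> K.span B}"
  assume "\<not> V \<subseteq> K.span B"
  then have "C \<noteq> {}" unfolding C_def by blast
  have C_V: "f \<in> V" "f \<noteq> 0" if "f \<in> C" for f
    using that unfolding C_def by (auto simp: K.span_zero)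
  then have "lead_mon le ` C \<subseteq> \<Union> (Poly_Mapping.keys ` V)"
    using lead_mon_in_keys[OF lin] by blast
  then have fin_C: "finite (lead_mon le ` C)" using fin by (rule finite_subset)
  define m where "m = L.Min (lead_mon le ` C)"
  have "m \<in> lead_mon le ` C" unfolding m_def using fin_C \<open>C \<noteq> {}\<close> by (intro L.Min_in) auto
  then obtain f where f: "f \<in> C" "lead_mon le f = m" by blast
  have "f \<in> V" "f \<noteq> 0" using C_V f(1) by auto
  then obtain b where b: "b \<in> B" "b \<in> V" "b \<noteq> 0" "lead_mon le b = lead_mon le f"
    using rep by blast
  define f' where "f' = f - kscale (Poly_Mapping.lookup f m / Poly_Mapping.lookup b m) b"
  have "f' \<in> V" unfolding f'_def using V \<open>f \<in> V\<close> b(2) by (intro K.subspace_diff K.subspace_scale)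
  moreover have "f' \<notin> K.span B"
  proof
    assume "f' \<in> K.span B"
    moreover have "kscale c b \<in> K.span B" for c using b(1) by (intro K.span_scale K.span_base)
    ultimately have "f' + kscale (Poly_Mapping.lookup f m / Poly_Mapping.lookup b m) b \<in> K.span B"
      by (rule K.span_add)
    then show False using f(1) unfolding C_def f'_def by simp
  qed
  ultimately have "f' \<in> C" unfolding C_def by blast
  then have "f' \<noteq> 0" and "le m (lead_mon le f')"
    using C_V fin_C unfolding m_def by (auto intro: L.Min_le)
  moreover have "lt (lead_mon le f') m"
    using lead_mon_reduce_less[OF lin \<open>f \<noteq> 0\<close> b(3,4)] \<open>f' \<noteq> 0\<close> f(2)
    unfolding f'_def by simp
  ultimately show False by (simp add: L.not_le[symmetric])
qed

lemma dim_eq_card_lead_mons: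
  fixes V :: "('v, 'k::field) mpoly set"
  assumes lin: "class.linorder le lt" and V: "K.subspace V"
    and fin: "finite (\<Union> (Poly_Mapping.keys ` V))"
  shows "K.dim V = card (lead_mons le V)"
proof -
  have "\<forall>m\<in>lead_mons le V. \<exists>f. f \<in> V \<and> f \<noteq> 0 \<and> lead_mon le f = m"
    unfolding lead_mons_def by blast
  then obtain b where b: "\<And>m. m \<in> lead_mons le V \<Longrightarrow> b m \<in> V \<and> b m \<noteq> 0 \<and> lead_mon le (b m) = m"
    by metis
  have "inj_on b (lead_mons le V)"
    using b by (intro inj_on_inverseI[where g = "lead_mon le"]) blast
  moreover have "inj_on (lead_mon le) (b ` lead_mons le V)"
    using b by (auto intro!: inj_onI)
  moreover have "K.independent (b ` lead_mons le V)"
    using b \<open>inj_on (lead_mon le) _\<close> by (intro independent_distinct_lead_mons[OF lin]) auto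
  moreover have "V \<subseteq> K.span (b ` lead_mons le V)"
  proof (rule span_lead_mon_representatives[OF lin V fin])
    fix f assume "f \<in> V" "f \<noteq> 0"
    then have "lead_mon le f \<in> lead_mons le V" unfolding lead_mons_def by blast
    then show "\<exists>b'\<in>b ` lead_mons le V. b' \<in> V \<and> b' \<noteq> 0 \<and> lead_mon le b' = lead_mon le f"
      using b by blast
  qed
  moreover have "b ` lead_mons le V \<subseteq> V" using b by blast
  ultimately show ?thesis by (intro K.dim_unique[where B = "b ` lead_mons le V"]) (simp_all add: card_image)
qed

section \<open>Homogeneous components\<close>

definition hom_component :: "('v mon \<Rightarrow> 'p) \<Rightarrow> 'p \<Rightarrow> ('v, 'k::zero) mpoly \<Rightarrow> ('v, 'k) mpoly" where
  "hom_component deg E f = Poly_Mapping.mapp (\<lambda>m c. c when deg m = E) f"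

lemma lookup_hom_component:
  "Poly_Mapping.lookup (hom_component deg E f) m = (Poly_Mapping.lookup f m when deg m = E)"
  by (simp add: hom_component_def lookup_mapp in_keys_iff when_def)

lemma keys_hom_component:
  "Poly_Mapping.keys (hom_component deg E f) = {m \<in> Poly_Mapping.keys f. deg m = E}"
  by (auto simp: in_keys_iff lookup_hom_component)

lemma hom_component_0 [simp]: "hom_component deg E 0 = 0"
  by (rule poly_mapping_eqI) (simp add: lookup_hom_component)

lemma hom_component_add:
  "hom_component deg E (p + q) = hom_component deg E p + hom_component deg E q"
  by (rule poly_mapping_eqI) (simp add: lookup_hom_component lookup_add when_add_distrib)

lemma hom_component_sum:
  "hom_component deg E (sum f A) = (\<Sum>a\<in>A. hom_component deg E (f a))"
  by (induction A rule: infinite_finite_induct)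
    (simp_all add: hom_component_add)

lemma hom_component_homogeneous:
  assumes "\<forall>m\<in>Poly_Mapping.keys p. deg m = D"
  shows "hom_component deg E p = (p when D = E)"
  by (rule poly_mapping_eqI) (use assms in \<open>auto simp: lookup_hom_component in_keys_iff when_def\<close>)

lemma sum_single_lookup:
  "(\<Sum>m\<in>Poly_Mapping.keys p. Poly_Mapping.single m (Poly_Mapping.lookup p m)) = p"
  by (rule poly_mapping_eqI) (simp add: lookup_sum lookup_single when_def in_keys_iff)

lemma hom_component_in_ideal_gen:
  fixes S :: "('v, 'k::field) mpoly set"
  assumes grading: "P_grading deg" and S: "\<forall>s\<in>S. P_homogeneous deg s"
    and p: "p \<in> ideal_gen S"
  shows "hom_component deg E p \<in> ideal_gen S"
  using p
proof (induction p rule: R.span_induct_alt)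
  case base
  then show ?case by (simp add: R.span_zero)
next
  case (step c s y)
  obtain D where D: "\<forall>m\<in>Poly_Mapping.keys s. deg m = D"
    using S step(1) unfolding P_homogeneous_def by blast
  have "hom_component deg E (Poly_Mapping.single a x * s) \<in> ideal_gen S" for a x
  proof -
    have homogeneous: "\<forall>m\<in>Poly_Mapping.keys (Poly_Mapping.single a x * s). deg m = deg a + D"
      using keys_mult[of "Poly_Mapping.single a x" s] D grading
      by (auto simp: P_grading_def split: if_splits)
    then show ?thesis
      using step(1)
      by (simp add: hom_component_homogeneous[OF homogeneous] when_def
          R.span_zero R.span_scale R.span_base)
  qed
  then have "hom_component deg E (c * s) \<in> ideal_gen S"
    by (subst sum_single_lookup[of c, symmetric])
      (simp add: sum_distrib_right hom_component_sum R.span_sum)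
  then show ?case using step(2) by (simp add: hom_component_add R.span_add)
qed

lemma keys_ideal_gen:
  fixes T :: "('v, 'k::field) mpoly set"
  assumes "p \<in> ideal_gen T" "m \<in> Poly_Mapping.keys p"
  obtains t a y where "t \<in> T" "y \<in> Poly_Mapping.keys t" "m = a + y"
proof -
  from assms(1) have "\<forall>m\<in>Poly_Mapping.keys p. \<exists>t\<in>T. \<exists>y\<in>Poly_Mapping.keys t. \<exists>a. m = a + y"
  proof (induction p rule: R.span_induct_alt)
    case (step c s y)
    have "Poly_Mapping.keys (c * s + y) \<subseteq> Poly_Mapping.keys (c * s) \<union> Poly_Mapping.keys y"
      by (rule keys_add)
    then show ?case using keys_mult[of c s] step by blast
  qed simp
  then show ?thesis using assms(2) that by blast
qed

section \<open>Leading monomials under the action\<close>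

lemma deg_lead_mons_piece:
  assumes "class.linorder le lt" "m \<in> lead_mons le (piece deg I D)"
  shows "deg m = D"
  using assms lead_mon_in_keys unfolding lead_mons_def piece_def by blast

lemma lead_mons_factor_low_degree:
  fixes I :: "('v::finite, 'k::field) mpoly set"
  assumes S: "\<forall>s\<in>S. std_homogeneous_le d s" "init_ideal le I = ideal_gen S"
    and m: "m \<in> lead_mons le I"
  obtains c m0 where "m0 \<in> lead_mons le I" "tdeg m0 \<le> d" "m = c + m0"
proof -
  have "Poly_Mapping.single m (1::'k) \<in> init_ideal le I"
    using m unfolding init_ideal_def lead_mons_def by (blast intro: R.span_base)
  then have "Poly_Mapping.single m (1::'k) \<in> ideal_gen S" using S(2) by simp
  moreover have "m \<in> Poly_Mapping.keys (Poly_Mapping.single m (1::'k))" by simp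
  ultimately obtain s a y where s: "s \<in> S" "y \<in> Poly_Mapping.keys s" "m = a + y"
    by (rule keys_ideal_gen)
  have "tdeg y \<le> d"
    using S(1) s(1,2) unfolding std_homogeneous_le_def by fastforce
  have "s \<in> ideal_gen {Poly_Mapping.single (lead_mon le f) (1::'k) | f. f \<in> I \<and> f \<noteq> 0}"
    using S(2) s(1) unfolding init_ideal_def by (simp add: R.span_base)
  then obtain t b y' where
    t: "t \<in> {Poly_Mapping.single (lead_mon le f) (1::'k) | f. f \<in> I \<and> f \<noteq> 0}"
    and y': "y' \<in> Poly_Mapping.keys t" "y = b + y'"
    using s(2) by (rule keys_ideal_gen)
  have "y' \<in> lead_mons le I"
    using t y'(1) unfolding lead_mons_def by auto
  moreover have "tdeg y' \<le> d" using \<open>tdeg y \<le> d\<close> y'(2) by (simp add: tdeg_add)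
  moreover have "m = (a + b) + y'" using s(3) y'(2) by (simp add: add.assoc)
  ultimately show ?thesis by (rule that)
qed

lemma lead_mons_in_lead_mons_piece:
  fixes S :: "('v, 'k::field) mpoly set"
  assumes lin: "class.linorder le lt" and grading: "P_grading deg"
    and S: "\<forall>s\<in>S. P_homogeneous deg s" and m: "m \<in> lead_mons le (ideal_gen S)"
  shows "m \<in> lead_mons le (piece deg (ideal_gen S) (deg m))"
proof -
  obtain f where f: "f \<in> ideal_gen S" "f \<noteq> 0" "lead_mon le f = m"
    using m unfolding lead_mons_def by blast
  define f0 where "f0 = hom_component deg (deg m) f"
  have "m \<in> Poly_Mapping.keys f0"
    using lead_mon_in_keys[OF lin f(2)] f(3) unfolding f0_def by (simp add: keys_hom_component)
  moreover have "\<forall>k\<in>Poly_Mapping.keys f0. le k m"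
    using lead_mon_max[OF lin f(2)] f(3) unfolding f0_def by (simp add: keys_hom_component)
  ultimately have "lead_mon le f0 = m" by (rule lead_mon_eqI[OF lin])
  moreover have "f0 \<in> piece deg (ideal_gen S) (deg m)"
    unfolding f0_def piece_def using hom_component_in_ideal_gen[OF grading S f(1)]
    by (simp add: keys_hom_component)
  moreover have "f0 \<noteq> 0" using \<open>m \<in> Poly_Mapping.keys f0\<close> by auto
  ultimately show ?thesis unfolding lead_mons_def by blast
qed

lemma act_mon_multiple_in_lead_mons_piece:
  fixes I :: "('v::finite, 'k::field) mpoly set"
  assumes grading: "P_grading deg"
    and refines: "\<And>m m'. deg m = deg m' \<Longrightarrow> tdeg m = tdeg m'"
    and order: "monomial_order le" and ideal: "is_ideal I"
    and monomial: "acts_monomially_upto G I d" and g: "g \<in> G" "bij g"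
    and ind: "induced_endo deg g \<phi>"
    and m0: "m0 \<in> lead_mons le (piece deg I (deg m0))" "tdeg m0 \<le> d"
  shows "act_mon g (c + m0) \<in> lead_mons (act_order g le) (piece deg I (\<phi> (deg (c + m0))))"
proof -
  define \<sigma> where "\<sigma> = act_mon g"
  note lin = monomial_order_linorder[OF order]
  note lin' = linorder_act_order[OF lin g(2)]
  obtain f0 where f0: "f0 \<in> I" "f0 \<noteq> 0" "lead_mon le f0 = m0"
    and f0_deg: "\<And>k. k \<in> Poly_Mapping.keys f0 \<Longrightarrow> deg k = deg m0"
    using m0(1) unfolding lead_mons_def piece_def by blast
  have "std_deg f0 \<le> d"
    using m0(2) refines[OF f0_deg] unfolding std_deg_def by (simp add: Max_le_iff)
  then obtain h where h: "h \<in> I" "Poly_Mapping.keys h = \<sigma> ` Poly_Mapping.keys f0"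
    using monomial f0(1) g unfolding acts_monomially_upto_def \<sigma>_def by (metis keys_act_poly)
  define p where "p = Poly_Mapping.single (\<sigma> c) 1 * h"
  have "p \<in> I" unfolding p_def using ideal h(1) by (rule R.subspace_scale)
  have keys_p: "Poly_Mapping.keys p = (\<lambda>k. \<sigma> (c + k)) ` Poly_Mapping.keys f0"
    unfolding p_def using h(2) g(2) by (auto simp: keys_single_mult \<sigma>_def act_mon_add)
  have m0_key: "m0 \<in> Poly_Mapping.keys f0" using lead_mon_in_keys[OF lin f0(2)] f0(3) by simp
  have "act_order g le k (\<sigma> (c + m0))" if "k \<in> Poly_Mapping.keys p" for k
    using that lead_mon_max[OF lin f0(2)] f0(3) monomial_order_add_left[OF order]
    unfolding keys_p act_order_def \<sigma>_def by (auto simp: act_mon_inv_act_mon g(2))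
  then have "lead_mon (act_order g le) p = \<sigma> (c + m0)"
    using m0_key by (intro lead_mon_eqI[OF lin']) (auto simp: keys_p)
  moreover have "p \<in> piece deg I (\<phi> (deg (c + m0)))"
    using \<open>p \<in> I\<close> ind grading f0_deg unfolding piece_def induced_endo_def P_grading_def
    by (auto simp: keys_p \<sigma>_def)
  moreover have "p \<noteq> 0" using m0_key keys_p by auto
  ultimately show ?thesis unfolding lead_mons_def \<sigma>_def[symmetric] by force
qed

lemma hilbert_series_le_induced:
  fixes deg :: "('v::finite) mon \<Rightarrow> 'p::monoid_add" and I :: "('v, 'k::field) mpoly set"
  assumes grading: "P_grading deg"
    and refines: "\<And>m m'. deg m = deg m' \<Longrightarrow> tdeg m = tdeg m'"
    and fin_pieces: "\<And>D. finite {m. deg m = D}"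
    and order: "monomial_order le" and ideal: "is_ideal I"
    and homog: "\<exists>S. (\<forall>s\<in>S. P_homogeneous deg s) \<and> I = ideal_gen S"
    and init_gen: "\<exists>S. (\<forall>s\<in>S. std_homogeneous_le d s) \<and> init_ideal le I = ideal_gen S"
    and monomial: "acts_monomially_upto G I d" and g: "g \<in> G" "bij g"
    and ind: "induced_endo deg g \<phi>"
  shows "hilbert_series deg I D \<le> hilbert_series deg I (\<phi> D)"
proof -
  obtain S where S: "\<forall>s\<in>S. P_homogeneous deg s" "I = ideal_gen S" using homog by blast
  obtain S' where S': "\<forall>s\<in>S'. std_homogeneous_le d s" "init_ideal le I = ideal_gen S'"
    using init_gen by blast
  note lin = monomial_order_linorder[OF order]
  note lin' = linorder_act_order[OF lin g(2)]
  define L where "L = lead_mons le (piece deg I D)"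
  \<comment> \<open>g does not preserve le, but the dimension count works for any linear order\<close>
  define L' where "L' = lead_mons (act_order g le) (piece deg I (\<phi> D))"
  have "act_mon g ` L \<subseteq> L'"
  proof
    fix m' assume "m' \<in> act_mon g ` L"
    then obtain m where m: "m \<in> L" "m' = act_mon g m" by blast
    then have "deg m = D" unfolding L_def by (intro deg_lead_mons_piece[OF lin])
    have "m \<in> lead_mons le I" using m(1) unfolding L_def lead_mons_def piece_def by blast
    then obtain c m0 where m0: "m0 \<in> lead_mons le I" "tdeg m0 \<le> d" "m = c + m0"
      by (rule lead_mons_factor_low_degree[OF S'])
    then have "m0 \<in> lead_mons le (piece deg I (deg m0))"
      using lead_mons_in_lead_mons_piece[OF lin grading S(1)] S(2) by simp
    from act_mon_multiple_in_lead_mons_piece[OF grading refines order ideal monomial g ind this m0(2),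
      where c = c]
    show "m' \<in> L'" using m(2) m0(3) \<open>deg m = D\<close> unfolding L'_def by simp
  qed
  moreover have "finite L'"
    using fin_pieces[of "\<phi> D"] unfolding L'_def
    by (rule finite_subset[rotated]) (auto dest: deg_lead_mons_piece[OF lin'])
  ultimately have "card (act_mon g ` L) \<le> card L'" by (rule card_mono[rotated])
  moreover have "card (act_mon g ` L) = card L"
    by (rule card_image[OF inj_on_subset[OF inj_act_mon[OF g(2)] subset_UNIV]])
  moreover have fin: "finite (\<Union> (Poly_Mapping.keys ` piece deg I E))" for E
    using fin_pieces[of E] by (rule finite_subset[rotated]) (auto simp: piece_def)
  ultimately show ?thesis
    unfolding hilbert_series_def L_def L'_def
      dim_eq_card_lead_mons[OF lin subspace_piece[OF ideal] fin[of D]]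
      dim_eq_card_lead_mons[OF lin' subspace_piece[OF ideal] fin[of "\<phi> D"]]
    by simp
qed

lemma hilbert_series_eq_0:
  fixes I :: "('v, 'k::field) mpoly set"
  assumes "E \<notin> range deg"
  shows "hilbert_series deg I E = 0"
proof -
  have "piece deg I E \<subseteq> K.span {}"
    using assms unfolding piece_def by (auto simp: K.span_empty simp flip: keys_eq_empty) (metis rangeI)
  then have "K.dim (piece deg I E) \<le> card ({} :: ('v, 'k) mpoly set)" by (rule K.dim_le_card) simp
  then show ?thesis unfolding hilbert_series_def by simp
qed

lemma induced_endo_inv_cancel:
  assumes "bij g" "induced_endo deg g \<phi>" "induced_endo deg (inv g) \<psi>"
  shows "\<psi> (\<phi> (deg m)) = deg m"
proof -
  have "\<psi> (\<phi> (deg m)) = deg (act_mon (inv g) (act_mon g m))"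
    using assms(2,3) unfolding induced_endo_def by simp
  then show ?thesis by (simp add: act_mon_inv_act_mon assms(1))
qed

lemma bij_betw_induced_endo:
  assumes "bij g" "induced_endo deg g \<phi>" "induced_endo deg (inv g) \<psi>"
  shows "bij_betw \<phi> (range deg) (range deg)"
proof (rule bij_betw_byWitness[where f' = \<psi>])
  have "\<phi> (\<psi> (deg m)) = deg m" for m
    using induced_endo_inv_cancel[of "inv g" deg \<psi> \<phi>] assms
    by (simp add: bij_imp_bij_inv inv_inv_eq)
  then show "\<forall>D\<in>range deg. \<phi> (\<psi> D) = D" by blast
  show "\<forall>D\<in>range deg. \<psi> (\<phi> D) = D" using induced_endo_inv_cancel[OF assms] by blast
  have "\<phi> (deg m) \<in> range deg" "\<psi> (deg m) \<in> range deg" for m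
    using assms(2,3) unfolding induced_endo_def by (metis rangeI)+
  then show "\<phi> ` range deg \<subseteq> range deg" "\<psi> ` range deg \<subseteq> range deg" by auto
qed

lemma ps_act_eq_self:
  assumes supp: "\<And>D. F D \<noteq> 0 \<Longrightarrow> D \<in> A" and bij: "bij_betw \<phi> A A"
    and inv: "\<And>D. D \<in> A \<Longrightarrow> F (\<phi> D) = F D"
  shows "ps_act \<phi> F = F"
proof
  fix E
  show "ps_act \<phi> F E = F E"
  proof (cases "E \<in> A")
    case True
    then have "E \<in> \<phi> ` A" using bij by (simp add: bij_betw_def)
    then obtain D where D: "D \<in> A" "\<phi> D = E" by blast
    have "{D'. F D' \<noteq> 0 \<and> \<phi> D' = E} = (if F E = 0 then {} else {D})"
      using D supp inv bij_betw_imp_inj_on[OF bij] by (auto dest: inj_onD)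
    then show ?thesis unfolding ps_act_def using D inv[OF D(1)] by simp
  next
    case False
    then have empty: "{D. F D \<noteq> 0 \<and> \<phi> D = E} = {}"
      using supp bij by (auto simp: bij_betw_def)
    have "F E = 0" using False supp by blast
    then show ?thesis unfolding ps_act_def empty by simp
  qed
qed

theorem mainTheorem13:
  fixes deg :: "('v::finite) mon \<Rightarrow> 'p::monoid_add"
    and G :: "('v \<Rightarrow> 'v) set"
    and le :: "'v mon \<Rightarrow> 'v mon \<Rightarrow> bool"
    and I :: "('v, 'k::field) mpoly set"
    and d :: nat
  assumes grading: "P_grading deg"
    and refines: "\<And>m m'. deg m = deg m' \<Longrightarrow> tdeg m = tdeg m'"
    and fin_pieces: "\<And>D. finite {m. deg m = D}"
    and group: "perm_group G"
    and order: "monomial_order le"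
    and ideal: "is_ideal I"
    and homog: "\<exists>S. (\<forall>s\<in>S. P_homogeneous deg s) \<and> I = ideal_gen S"
    and init_gen: "\<exists>S. (\<forall>s\<in>S. std_homogeneous_le d s) \<and> init_ideal le I = ideal_gen S"
    and monomial: "acts_monomially_upto G I d"
    and compatible: "P_compatible deg G"
  shows "\<forall>g\<in>G. \<forall>\<phi>. induced_endo deg g \<phi> \<longrightarrow>
           ps_act \<phi> (hilbert_series deg I) = hilbert_series deg I"
proof (intro ballI allI impI)
  fix g \<phi> assume g: "g \<in> G" and \<phi>: "induced_endo deg g \<phi>"
  have "bij g" "inv g \<in> G" using group g unfolding perm_group_def by blast+
  obtain \<psi> where \<psi>: "induced_endo deg (inv g) \<psi>"
    using compatible \<open>inv g \<in> G\<close> unfolding P_compatible_def by blast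
  have le: "hilbert_series deg I D \<le> hilbert_series deg I (\<chi> D)"
    if "h \<in> G" "induced_endo deg h \<chi>" for h \<chi> D
    using that group hilbert_series_le_induced[OF grading refines fin_pieces order ideal homog
        init_gen monomial that(1) _ that(2)]
    unfolding perm_group_def by blast
  show "ps_act \<phi> (hilbert_series deg I) = hilbert_series deg I"
  proof (rule ps_act_eq_self)
    show "bij_betw \<phi> (range deg) (range deg)" by (rule bij_betw_induced_endo[OF \<open>bij g\<close> \<phi> \<psi>])
    show "D \<in> range deg" if "hilbert_series deg I D \<noteq> 0" for D
      using that hilbert_series_eq_0 by metis
    show "hilbert_series deg I (\<phi> D) = hilbert_series deg I D" if "D \<in> range deg" for D
    proof -
      have "\<psi> (\<phi> D) = D" using that induced_endo_inv_cancel[OF \<open>bij g\<close> \<phi> \<psi>] by blast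
      then show ?thesis using le[OF g \<phi>, of D] le[OF \<open>inv g \<in> G\<close> \<psi>, of "\<phi> D"] by simp
    qed
  qed
qed

end
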